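(* Let $\sigma_w^2=0$. Then $(\alpha,\sigma^2)=(1,0)$ is a fixed point of the real SE map. Let $\delta_{\mathrm{global}}:=1+\frac{4}{\pi^2}$. If $\delta>\delta_{\mathrm{global}}$, there exist $\epsilon_1>0,\epsilon_2>0$ such that for all $\alpha_0\in(1-\epsilon_1,1)$ and $\sigma_0^2\in(0,\epsilon_2)$ the real SE sequences satisfy $\alpha_t\to1$, $\sigma_t^2\to0$. If $\delta<\delta_{\mathrm{global}}$, the real SE sequences cannot converge to $(1,0)$ unless $(\alpha_0,\sigma_0^2)=(1,0)$.
   Context: Real state evolution. Fix $\delta>0$, $\sigma_w^2\ge0$. For $\alpha\in\mathbb{R}$, $\sigma^2\ge0$, $(\alpha,\sigma^2)\ne(0,0)$, with $\sigma=\sqrt{\sigma^2}$ and the convention $\arctan(\alpha/0)=\frac\pi2\,\mathrm{sign}(\alpha)$, define $$\psi_1(\alpha,\sigma^2)=\frac2\pi\arctan\Big(\frac\alpha\sigma\Big),\qquad \psi_2(\alpha,\sigma^2;\delta,\sigma_w^2)=\frac1\delta\Big[\alpha^2+\sigma^2+1-\frac{4\sigma}{\pi}-\frac{4\alpha}{\pi}\arctan\Big(\frac\alpha\sigma\Big)\Big]+\sigma_w^2 .$$ The real SE sequences are $\alpha_{t+1}=\psi_1(\alpha_t,\sigma_t^2)$, $\sigma_{t+1}^2=\psi_2(\alpha_t,\sigma_t^2;\delta,\sigma_w^2)$, $t\ge0$. *)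

theory Defs
  imports Complex_Main
begin

definition arctan_conv :: "real \<Rightarrow> real \<Rightarrow> real" where
  "arctan_conv a s = (if s = 0 then pi / 2 * sgn a else arctan (a / s))"

definition psi1 :: "real \<Rightarrow> real \<Rightarrow> real" where
  "psi1 \<alpha> \<sigma>2 = 2 / pi * arctan_conv \<alpha> (sqrt \<sigma>2)"

definition psi2 :: "real \<Rightarrow> real \<Rightarrow> real \<Rightarrow> real \<Rightarrow> real" where
  "psi2 \<alpha> \<sigma>2 \<delta> \<sigma>w2 =
     (1 / \<delta>) * (\<alpha>\<^sup>2 + \<sigma>2 + 1 - 4 * sqrt \<sigma>2 / pi
                  - 4 * \<alpha> / pi * arctan_conv \<alpha> (sqrt \<sigma>2)) + \<sigma>w2"

primrec se :: "real \<Rightarrow> real \<Rightarrow> real \<Rightarrow> real \<Rightarrow> nat \<Rightarrow> real \<times> real" where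
  "se \<delta> \<sigma>w2 \<alpha>0 \<sigma>02 0 = (\<alpha>0, \<sigma>02)"
| "se \<delta> \<sigma>w2 \<alpha>0 \<sigma>02 (Suc t) =
     (let (a, s) = se \<delta> \<sigma>w2 \<alpha>0 \<sigma>02 t in (psi1 a s, psi2 a s \<delta> \<sigma>w2))"

definition delta_global :: real where
  "delta_global = 1 + 4 / pi\<^sup>2"

end

theory Submission
  imports Defs "HOL-Analysis.Complex_Transcendental"
begin

text \<open>
  For \<open>a > 0\<close>, \<open>s \<ge> 0\<close> and \<open>t = sqrt s / a\<close> one has \<open>1 - psi1 a s = (2/pi) arctan t\<close> and
  \<open>\<delta> psi2 a s \<delta> 0 = (1 - a)\<^sup>2 + s - (4a/pi) (t - arctan t)\<close> with \<open>0 \<le> t - arctan t \<le> t\<^sup>3/3\<close>.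
  So near \<open>(1, 0)\<close> the map acts on \<open>u = (1 - a)\<^sup>2\<close> and \<open>s\<close> almost linearly:
  \<open>u' \<approx> (4/pi\<^sup>2) s\<close> and \<open>s' \<approx> (u + s)/\<delta>\<close>, hence \<open>\<kappa> u' + s' \<approx> u/\<delta> + (4\<kappa>/pi\<^sup>2 + 1/\<delta>) s\<close>.
  If \<open>\<delta> > 1 + 4/pi\<^sup>2\<close>, the weight \<open>\<kappa> = 1/(\<rho>\<delta>)\<close> makes the Lyapunov function \<open>\<kappa> u + s\<close>
  contract by a factor \<open>\<rho> < 1\<close> near \<open>(1, 0)\<close>, so nearby trajectories converge geometrically.
  If \<open>\<delta> < 1 + 4/pi\<^sup>2\<close>, the weight \<open>\<kappa> = 1/\<delta>\<close> makes it nondecreasing near \<open>(1, 0)\<close>; a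
  trajectory converging to \<open>(1, 0)\<close> must then reach \<open>(1, 0)\<close> exactly, and \<open>(1, 0)\<close> is its own
  only preimage.
\<close>

lemma arctan_ge_cubic:
  assumes "0 \<le> t"
  shows "t - t^3/3 \<le> arctan t"
proof -
  have "(\<lambda>x. arctan x - x + x^3/3) 0 \<le> (\<lambda>x. arctan x - x + x^3/3) t"
  proof (rule DERIV_nonneg_imp_nondecreasing[OF assms])
    fix x :: real
    have "1 + x\<^sup>2 > 0"
      by (simp add: add_pos_nonneg)
    then have "inverse (1 + x\<^sup>2) - 1 + x\<^sup>2 = x^4 / (1 + x\<^sup>2)"
      by (simp add: field_simps power2_eq_square power4_eq_xxxx)
    then have "0 \<le> inverse (1 + x\<^sup>2) - 1 + x\<^sup>2"
      by simp
    moreover have "((\<lambda>x. arctan x - x + x^3/3) has_real_derivative inverse (1 + x\<^sup>2) - 1 + x\<^sup>2) (at x)"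
      by (auto intro!: derivative_eq_intros)
    ultimately show "\<exists>y. ((\<lambda>x. arctan x - x + x^3/3) has_real_derivative y) (at x) \<and> 0 \<le> y"
      by blast
  qed
  then show ?thesis
    by simp
qed

lemma arctan_sq_ge:
  assumes "0 \<le> t" "t\<^sup>2 \<le> 3"
  shows "(1 - 2 * t\<^sup>2 / 3) * t\<^sup>2 \<le> (arctan t)\<^sup>2"
proof -
  have "0 \<le> t - t^3/3"
    using assms mult_left_mono[of "t\<^sup>2" 3 t] by (simp add: power2_eq_square power3_eq_cube)
  with arctan_ge_cubic[OF assms(1)] have "(t - t^3/3)\<^sup>2 \<le> (arctan t)\<^sup>2"
    by (rule power_mono)
  moreover have "(t - t^3/3)\<^sup>2 = (1 - 2 * t\<^sup>2 / 3) * t\<^sup>2 + (t^3)\<^sup>2/9"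
    by (simp add: power2_eq_square power3_eq_cube algebra_simps)
  moreover have "0 \<le> (t^3)\<^sup>2/9"
    by simp
  ultimately show ?thesis
    by linarith
qed

lemma funpow_eq_imp_eq:
  assumes "\<And>y. f y = z \<Longrightarrow> y = z" "(f ^^ n) x = z"
  shows "x = z"
  using assms(2)
proof (induction n arbitrary: x)
  case (Suc n)
  have "(f ^^ n) (f x) = z"
    using Suc.prems by (simp only: funpow_Suc_right comp_def)
  then have "f x = z"
    by (rule Suc.IH)
  then show ?case
    by (rule assms(1))
qed simp

lemma funpow_lyapunov_decay:
  fixes V :: "'a \<Rightarrow> real"
  assumes step: "\<And>y. P y \<Longrightarrow> V y \<le> c \<Longrightarrow> P (f y) \<and> V (f y) \<le> \<rho> * V y"
    and "0 \<le> \<rho>" "\<rho> \<le> 1" "P x" "0 \<le> V x" "V x \<le> c"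
  shows "P ((f ^^ n) x) \<and> V ((f ^^ n) x) \<le> \<rho> ^ n * V x"
proof (induction n)
  case (Suc n)
  have "\<rho> ^ n * V x \<le> V x"
    by (rule mult_left_le_one_le[OF assms(5) zero_le_power[OF assms(2)] power_le_one[OF assms(2,3)]])
  then have "V ((f ^^ n) x) \<le> c"
    using Suc assms(6) by linarith
  then have "P ((f ^^ Suc n) x) \<and> V ((f ^^ Suc n) x) \<le> \<rho> * V ((f ^^ n) x)"
    using step Suc by simp
  moreover have "\<rho> * V ((f ^^ n) x) \<le> \<rho> * (\<rho> ^ n * V x)"
    using Suc assms(2) by (intro mult_left_mono) auto
  ultimately show ?case
    by simp
qed (use assms in simp)

lemma eventually_mono_le_lim:
  fixes X :: "nat \<Rightarrow> 'a :: linorder_topology"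
  assumes "\<And>t. N \<le> t \<Longrightarrow> X t \<le> X (Suc t)" "X \<longlonglongrightarrow> L"
  shows "X N \<le> L"
proof -
  have "incseq (\<lambda>n. X (n + N))"
    using assms(1) by (intro incseq_SucI) simp
  moreover have "(\<lambda>n. X (n + N)) \<longlonglongrightarrow> L"
    using assms(2) by (rule LIMSEQ_ignore_initial_segment)
  ultimately show ?thesis
    using incseq_le[of "\<lambda>n. X (n + N)" L 0] by simp
qed

lemma arctan_conv_pos:
  assumes "0 < a" "0 \<le> s"
  shows "arctan_conv a s = pi/2 - arctan (s / a)"
proof (cases "s = 0")
  case False
  then have "arctan (1 / (s / a)) = pi/2 - arctan (s / a)"
    using assms arctan_inverse[of "s / a"] by simp
  then show ?thesis
    using False by (simp add: arctan_conv_def)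
qed (use assms in \<open>simp add: arctan_conv_def\<close>)

lemma psi1_dist_sq:
  assumes "0 < a" "0 \<le> s"
  shows "(1 - psi1 a s)\<^sup>2 = 4/pi\<^sup>2 * (arctan (sqrt s / a))\<^sup>2"
proof -
  have "1 - psi1 a s = 2/pi * arctan (sqrt s / a)"
    using assms by (simp add: psi1_def arctan_conv_pos right_diff_distrib)
  then show ?thesis
    by (simp add: power_mult_distrib power_divide)
qed

lemma psi2_eq:
  assumes "0 < a" "0 \<le> s"
  shows "psi2 a s \<delta> w = ((1 - a)\<^sup>2 + s - 4*a/pi * (sqrt s / a - arctan (sqrt s / a))) / \<delta> + w"
proof -
  have defect: "4*a/pi * (sqrt s / a - arctan (sqrt s / a)) = 4 * sqrt s / pi - 4*a/pi * arctan (sqrt s / a)"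
    using assms by (simp add: field_simps)
  have conv: "4*a/pi * (pi/2 - arctan (sqrt s / a)) = 2 * a - 4*a/pi * arctan (sqrt s / a)"
    by (simp add: field_simps)
  show ?thesis
    unfolding psi2_def arctan_conv_pos[OF assms(1) real_sqrt_ge_zero[OF assms(2)]] defect conv
    by (cases "\<delta> = 0") (simp_all add: field_simps power2_eq_square)
qed

lemma psi1_le_one: "psi1 a s \<le> 1"
proof -
  have "arctan_conv a (sqrt s) \<le> pi/2"
    using arctan_ubound[of "a / sqrt s"] by (auto simp: arctan_conv_def sgn_if)
  then show ?thesis
    by (simp add: psi1_def field_simps)
qed

lemma psi1_neg:
  assumes "0 < a" "s < 0"
  shows "psi1 a s < 0"
proof -
  have "a / sqrt s < 0"
    using assms by (simp add: divide_pos_neg)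
  then show ?thesis
    using assms by (simp add: psi1_def arctan_conv_def divide_neg_pos)
qed

lemma psi1_dist_sq_le:
  assumes "0 < a" "0 \<le> s"
  shows "(1 - psi1 a s)\<^sup>2 \<le> 4/pi\<^sup>2 * (s / a\<^sup>2)"
proof -
  have "(arctan (sqrt s / a))\<^sup>2 \<le> (sqrt s / a)\<^sup>2"
    using assms arctan_le_self[of "sqrt s / a"] by (intro power_mono) auto
  then have "4/pi\<^sup>2 * (arctan (sqrt s / a))\<^sup>2 \<le> 4/pi\<^sup>2 * (s / a\<^sup>2)"
    using assms by (intro mult_left_mono) (auto simp: power_divide)
  then show ?thesis
    using assms by (simp only: psi1_dist_sq)
qed

lemma psi1_dist_sq_ge:
  assumes "0 < a" "0 \<le> s" "s / a\<^sup>2 \<le> 3"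
  shows "4/pi\<^sup>2 * ((1 - 2 * (s / a\<^sup>2) / 3) * (s / a\<^sup>2)) \<le> (1 - psi1 a s)\<^sup>2"
proof -
  have "(sqrt s / a)\<^sup>2 = s / a\<^sup>2"
    using assms by (simp add: power_divide)
  then have "(1 - 2 * (s / a\<^sup>2) / 3) * (s / a\<^sup>2) \<le> (arctan (sqrt s / a))\<^sup>2"
    using assms arctan_sq_ge[of "sqrt s / a"] by simp
  then have "4/pi\<^sup>2 * ((1 - 2 * (s / a\<^sup>2) / 3) * (s / a\<^sup>2)) \<le> 4/pi\<^sup>2 * (arctan (sqrt s / a))\<^sup>2"
    by (intro mult_left_mono) auto
  then show ?thesis
    using assms by (simp only: psi1_dist_sq)
qed

lemma psi2_le:
  assumes "0 < a" "0 \<le> s" "0 < \<delta>"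
  shows "psi2 a s \<delta> 0 \<le> ((1 - a)\<^sup>2 + s) / \<delta>"
proof -
  have "0 \<le> 4*a/pi * (sqrt s / a - arctan (sqrt s / a))"
    using assms arctan_le_self[of "sqrt s / a"] by simp
  then show ?thesis
    using assms by (simp add: psi2_eq divide_right_mono)
qed

text \<open>The correction term of \<open>psi2\<close> is of order \<open>s * sqrt s\<close>, so it costs at most \<open>g * s\<close>.\<close>
lemma psi2_ge:
  assumes "1/2 \<le> a" "0 \<le> s" "0 < \<delta>" "4 * sqrt s \<le> g"
  shows "((1 - a)\<^sup>2 + (1 - g) * s) / \<delta> \<le> psi2 a s \<delta> 0"
proof -
  define t where "t = sqrt s / a"
  have a: "0 < a" "1/4 \<le> a\<^sup>2"
    using assms(1) power_mono[of "1/2" a 2] by (auto simp: power2_eq_square)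
  have "0 \<le> t"
    using a assms(2) by (simp add: t_def)
  then have "t - arctan t \<le> t^3/3"
    using arctan_ge_cubic[of t] by linarith
  then have "4*a/pi * (t - arctan t) \<le> 4*a/pi * (t^3/3)"
    using a by (intro mult_left_mono) auto
  also have "\<dots> = 4 * sqrt s / (3 * pi * a\<^sup>2) * s"
    using a assms(2) by (simp add: t_def power3_eq_cube power2_eq_square field_simps)
  also have "\<dots> \<le> 4 * sqrt s * s"
  proof -
    have "2 * (1/4) \<le> pi * a\<^sup>2"
      using pi_ge_two a(2) by (intro mult_mono) auto
    then have "1 \<le> 3 * pi * a\<^sup>2"
      by linarith
    then have "4 * sqrt s / (3 * pi * a\<^sup>2) \<le> 4 * sqrt s"
      using divide_left_mono[of 1 "3 * pi * a\<^sup>2" "4 * sqrt s"] assms(2) by simp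
    then show ?thesis
      using assms(2) by (rule mult_right_mono)
  qed
  also have "\<dots> \<le> g * s"
    using assms by (intro mult_right_mono) auto
  finally show ?thesis
    using a assms(2,3) by (simp add: psi2_eq t_def divide_right_mono algebra_simps)
qed

definition se_map :: "real \<Rightarrow> real \<Rightarrow> real \<times> real \<Rightarrow> real \<times> real" where
  "se_map \<delta> w = (\<lambda>(a, s). (psi1 a s, psi2 a s \<delta> w))"

lemma se_eq_funpow: "se \<delta> w a0 s0 t = (se_map \<delta> w ^^ t) (a0, s0)"
  by (induction t) (simp_all add: se_map_def case_prod_beta)

lemma se_map_eq_fixed_point_imp:
  assumes "0 < \<delta>" "se_map \<delta> 0 x = (1, 0)"
  shows "x = (1, 0)"
proof -
  obtain a s where x: "x = (a, s)"
    by fastforce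
  have psi: "psi1 a s = 1" "psi2 a s \<delta> 0 = 0"
    using assms(2) by (simp_all add: x se_map_def)
  have "sqrt s = 0"
  proof (rule ccontr)
    assume "sqrt s \<noteq> 0"
    then have "psi1 a s = 2/pi * arctan (a / sqrt s)"
      by (simp add: psi1_def arctan_conv_def)
    also have "\<dots> < 2/pi * (pi/2)"
      using arctan_ubound by (intro mult_strict_left_mono) auto
    finally show False
      using psi by simp
  qed
  then have "s = 0" "0 < a"
    using psi(1) by (auto simp: psi1_def arctan_conv_def sgn_if split: if_splits)
  then have "psi2 a s \<delta> 0 = (a - 1)\<^sup>2 / \<delta>"
    by (simp add: psi2_def arctan_conv_def field_simps power2_eq_square)
  then have "a = 1"
    using psi(2) assms(1) by simp
  then show ?thesis
    using x \<open>s = 0\<close> by simp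
qed

definition se_lyapunov :: "real \<Rightarrow> real \<times> real \<Rightarrow> real" where
  "se_lyapunov \<kappa> = (\<lambda>(a, s). \<kappa> * (1 - a)\<^sup>2 + s)"

lemma se_lyapunov_tendsto_zero_imp_tendsto:
  fixes x :: "nat \<Rightarrow> real \<times> real"
  assumes "0 < \<kappa>" "\<And>t. 0 \<le> snd (x t)" "(\<lambda>t. se_lyapunov \<kappa> (x t)) \<longlonglongrightarrow> 0"
  shows "(\<lambda>t. fst (x t)) \<longlonglongrightarrow> 1" "(\<lambda>t. snd (x t)) \<longlonglongrightarrow> 0"
proof -
  have bounds: "snd (x t) \<le> se_lyapunov \<kappa> (x t)" "(1 - fst (x t))\<^sup>2 \<le> se_lyapunov \<kappa> (x t) / \<kappa>" for t
    using assms(1) assms(2)[of t] by (auto simp: se_lyapunov_def case_prod_beta field_simps)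
  have "\<forall>t. norm (snd (x t)) \<le> se_lyapunov \<kappa> (x t)"
    using bounds(1) assms(2) by simp
  then show "(\<lambda>t. snd (x t)) \<longlonglongrightarrow> 0"
    by (rule Lim_null_comparison[OF always_eventually assms(3)])
  have "(\<lambda>t. sqrt (se_lyapunov \<kappa> (x t) / \<kappa>)) \<longlonglongrightarrow> 0"
    using tendsto_real_sqrt[OF tendsto_divide_zero[OF assms(3)]] by simp
  moreover have "\<forall>t. norm (fst (x t) - 1) \<le> sqrt (se_lyapunov \<kappa> (x t) / \<kappa>)"
    using real_sqrt_le_mono[OF bounds(2)] by (simp add: abs_minus_commute)
  ultimately have "(\<lambda>t. fst (x t) - 1) \<longlonglongrightarrow> 0"
    by (rule Lim_null_comparison[OF always_eventually, rotated])
  then show "(\<lambda>t. fst (x t)) \<longlonglongrightarrow> 1"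
    by (simp add: LIM_zero_iff)
qed

lemma se_map_lyapunov_contracts:
  assumes "0 < \<delta>" "1/2 \<le> \<rho>" "4/pi\<^sup>2 + \<rho>^3 \<le> \<rho>^4 * \<delta>" "\<rho> \<le> a" "0 \<le> s" "s \<le> 1/16"
  shows "0 \<le> psi2 a s \<delta> 0"
    and "se_lyapunov (1/(\<rho>*\<delta>)) (se_map \<delta> 0 (a, s)) \<le> \<rho> * se_lyapunov (1/(\<rho>*\<delta>)) (a, s)"
proof -
  have a: "1/2 \<le> a" "0 < a"
    using assms by auto
  have "sqrt s \<le> sqrt (1/16)"
    using assms(6) by (rule real_sqrt_le_mono)
  then have "4 * sqrt s \<le> 1"
    by (simp add: real_sqrt_divide)
  then have "(1 - a)\<^sup>2 / \<delta> \<le> psi2 a s \<delta> 0"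
    using psi2_ge[OF a(1) assms(5,1), of 1] by simp
  moreover have "0 \<le> (1 - a)\<^sup>2 / \<delta>"
    using assms(1) by simp
  ultimately show "0 \<le> psi2 a s \<delta> 0"
    by linarith
  have gain: "4/(pi\<^sup>2 * a\<^sup>2) / (\<rho>*\<delta>) + 1/\<delta> \<le> \<rho>"
  proof -
    have "\<rho>\<^sup>2 \<le> a\<^sup>2"
      using assms by (intro power_mono) auto
    then have "4/(pi\<^sup>2 * a\<^sup>2) \<le> 4/(pi\<^sup>2 * \<rho>\<^sup>2)"
      using assms by (intro divide_left_mono mult_left_mono) auto
    then have "4/(pi\<^sup>2 * a\<^sup>2) / (\<rho>*\<delta>) + 1/\<delta> \<le> 4/(pi\<^sup>2 * \<rho>\<^sup>2) / (\<rho>*\<delta>) + 1/\<delta>"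
      using assms by (intro add_right_mono divide_right_mono) auto
    also have "\<dots> = (4/pi\<^sup>2 + \<rho>^3) / (\<rho>^3 * \<delta>)"
      using assms by (simp add: field_simps power2_eq_square power3_eq_cube)
    also have "\<dots> \<le> (\<rho>^4 * \<delta>) / (\<rho>^3 * \<delta>)"
      using assms by (intro divide_right_mono) auto
    also have "\<dots> = \<rho>"
      using assms by (simp add: field_simps power_numeral_reduce)
    finally show ?thesis .
  qed
  have "se_lyapunov (1/(\<rho>*\<delta>)) (se_map \<delta> 0 (a, s))
      = 1/(\<rho>*\<delta>) * (1 - psi1 a s)\<^sup>2 + psi2 a s \<delta> 0"
    by (simp add: se_lyapunov_def se_map_def)
  also have "\<dots> \<le> 1/(\<rho>*\<delta>) * (4/pi\<^sup>2 * (s / a\<^sup>2)) + ((1 - a)\<^sup>2 + s) / \<delta>"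
    using psi1_dist_sq_le[OF a(2) assms(5)] psi2_le[OF a(2) assms(5,1)] assms
    by (intro add_mono mult_left_mono) auto
  also have "\<dots> = (1 - a)\<^sup>2 / \<delta> + s * (4/(pi\<^sup>2 * a\<^sup>2) / (\<rho>*\<delta>) + 1/\<delta>)"
    by (simp add: add_divide_distrib algebra_simps)
  also have "\<dots> \<le> (1 - a)\<^sup>2 / \<delta> + s * \<rho>"
    using gain assms(5) by (intro add_left_mono mult_left_mono)
  also have "\<dots> = \<rho> * se_lyapunov (1/(\<rho>*\<delta>)) (a, s)"
    using assms by (simp add: se_lyapunov_def field_simps)
  finally show "se_lyapunov (1/(\<rho>*\<delta>)) (se_map \<delta> 0 (a, s)) \<le> \<rho> * se_lyapunov (1/(\<rho>*\<delta>)) (a, s)" .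
qed

lemma one_less_delta_global: "1 < delta_global"
  by (simp add: delta_global_def)

lemma contraction_rate_exists:
  assumes "delta_global < \<delta>"
  obtains \<rho> where "3/4 < \<rho>" "\<rho> < 1" "4/pi\<^sup>2 + \<rho>^3 \<le> \<rho>^4 * \<delta>"
proof -
  \<comment> \<open>\<open>\<eta>\<close> is chosen so that Bernoulli's inequality gives \<open>(1 - \<eta>)^4 \<delta> \<ge> (1 - 4\<eta>) \<delta> = delta_global\<close>.\<close>
  define \<eta> where "\<eta> = (\<delta> - delta_global) / (4 * \<delta>)"
  have \<delta>: "1 < \<delta>"
    using assms one_less_delta_global by linarith
  have \<eta>: "0 < \<eta>" "\<eta> < 1/4"
    using assms one_less_delta_global \<delta> by (auto simp: \<eta>_def field_simps)
  have "4/pi\<^sup>2 + (1 - \<eta>)^3 \<le> 4/pi\<^sup>2 + 1"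
    using \<eta> by (simp add: power_le_one)
  also have "\<dots> = (1 - 4 * \<eta>) * \<delta>"
    using \<delta> by (simp add: \<eta>_def delta_global_def field_simps)
  also have "\<dots> \<le> (1 - \<eta>)^4 * \<delta>"
    using Bernoulli_inequality[of "-\<eta>" 4] \<eta> \<delta> by (intro mult_right_mono) auto
  finally show thesis
    using \<eta> by (intro that[of "1 - \<eta>"]) auto
qed

lemma se_map_contracts_near_fixed_point:
  assumes "delta_global < \<delta>"
  obtains \<rho> c where "1/2 \<le> \<rho>" "\<rho> < 1" "0 < c"
    "\<And>x. 0 \<le> snd x \<Longrightarrow> se_lyapunov (1/(\<rho>*\<delta>)) x \<le> c \<Longrightarrow>
      0 \<le> snd (se_map \<delta> 0 x) \<and>
      se_lyapunov (1/(\<rho>*\<delta>)) (se_map \<delta> 0 x) \<le> \<rho> * se_lyapunov (1/(\<rho>*\<delta>)) x"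
proof -
  obtain \<rho> where \<rho>: "3/4 < \<rho>" "\<rho> < 1" and gain: "4/pi\<^sup>2 + \<rho>^3 \<le> \<rho>^4 * \<delta>"
    using contraction_rate_exists[OF assms] by blast
  define c where "c = (1 - \<rho>)\<^sup>2 / \<delta>"
  have \<delta>: "1 < \<delta>"
    using assms one_less_delta_global by linarith
  show thesis
  proof (rule that)
    show "1/2 \<le> \<rho>" "\<rho> < 1" "0 < c"
      using \<rho> \<delta> by (simp_all add: c_def)
    fix x :: "real \<times> real"
    assume nonneg: "0 \<le> snd x" and V: "se_lyapunov (1/(\<rho>*\<delta>)) x \<le> c"
    obtain a s where x: "x = (a, s)"
      by fastforce
    have V': "(1 - a)\<^sup>2 / (\<rho> * \<delta>) + s \<le> c" "0 \<le> (1 - a)\<^sup>2 / (\<rho> * \<delta>)" "0 \<le> s"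
      using V nonneg \<rho> \<delta> by (simp_all add: x se_lyapunov_def)
    then have "(1 - a)\<^sup>2 / (\<rho> * \<delta>) \<le> c"
      by linarith
    then have "(1 - a)\<^sup>2 \<le> \<rho> * \<delta> * c"
      using \<rho> \<delta> by (simp add: divide_le_eq mult.commute)
    also have "\<dots> \<le> (1 - \<rho>)\<^sup>2"
      using \<rho> \<delta> by (simp add: c_def mult_left_le_one_le)
    finally have "\<rho> \<le> a"
      using \<rho> by (simp add: abs_le_square_iff[symmetric])
    moreover have "s \<le> 1/16"
    proof -
      have "s \<le> c"
        using V' by linarith
      also have "c \<le> (1 - \<rho>)\<^sup>2"
        using \<delta> by (simp add: c_def divide_le_eq mult_le_cancel_left1)
      also have "(1 - \<rho>)\<^sup>2 \<le> (1/4)\<^sup>2"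
        using \<rho> by (intro power_mono) auto
      finally show ?thesis
        by (simp add: power2_eq_square)
    qed
    ultimately show "0 \<le> snd (se_map \<delta> 0 x) \<and>
        se_lyapunov (1/(\<rho>*\<delta>)) (se_map \<delta> 0 x) \<le> \<rho> * se_lyapunov (1/(\<rho>*\<delta>)) x"
      using se_map_lyapunov_contracts[of \<delta> \<rho> a s] \<delta> \<rho> gain nonneg by (simp add: x se_map_def)
  qed
qed

lemma se_converges_near_fixed_point:
  assumes "delta_global < \<delta>"
  shows "\<exists>\<epsilon>1 > 0. \<exists>\<epsilon>2 > 0. \<forall>\<alpha>0 \<sigma>02.
    \<alpha>0 \<in> {1 - \<epsilon>1 <..< 1} \<and> \<sigma>02 \<in> {0 <..< \<epsilon>2} \<longrightarrow>
      ((\<lambda>t. fst (se \<delta> 0 \<alpha>0 \<sigma>02 t)) \<longlonglongrightarrow> 1) \<and> ((\<lambda>t. snd (se \<delta> 0 \<alpha>0 \<sigma>02 t)) \<longlonglongrightarrow> 0)"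
proof -
  obtain \<rho> c where \<rho>: "1/2 \<le> \<rho>" "\<rho> < 1" and "0 < c"
    and step: "\<And>x. 0 \<le> snd x \<Longrightarrow> se_lyapunov (1/(\<rho>*\<delta>)) x \<le> c \<Longrightarrow>
      0 \<le> snd (se_map \<delta> 0 x) \<and>
      se_lyapunov (1/(\<rho>*\<delta>)) (se_map \<delta> 0 x) \<le> \<rho> * se_lyapunov (1/(\<rho>*\<delta>)) x"
    using se_map_contracts_near_fixed_point[OF assms] by blast
  define \<kappa> where "\<kappa> = 1/(\<rho>*\<delta>)"
  have "0 < \<delta>"
    using assms one_less_delta_global by linarith
  then have "0 < \<kappa>"
    using \<rho> by (simp add: \<kappa>_def)
  define \<epsilon>1 where "\<epsilon>1 = sqrt (c / (2 * \<kappa>))"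
  define \<epsilon>2 where "\<epsilon>2 = c / 2"
  have "((\<lambda>t. fst (se \<delta> 0 \<alpha>0 \<sigma>02 t)) \<longlonglongrightarrow> 1) \<and> ((\<lambda>t. snd (se \<delta> 0 \<alpha>0 \<sigma>02 t)) \<longlonglongrightarrow> 0)"
    if "\<alpha>0 \<in> {1 - \<epsilon>1 <..< 1}" "\<sigma>02 \<in> {0 <..< \<epsilon>2}" for \<alpha>0 \<sigma>02
  proof -
    define V0 where "V0 = se_lyapunov \<kappa> (\<alpha>0, \<sigma>02)"
    have "(1 - \<alpha>0)\<^sup>2 \<le> \<epsilon>1\<^sup>2"
      using that(1) by (intro power_mono) auto
    then have "\<kappa> * (1 - \<alpha>0)\<^sup>2 \<le> c / 2"
      using \<open>0 < \<kappa>\<close> \<open>0 < c\<close> by (simp add: \<epsilon>1_def field_simps)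
    then have V0: "0 \<le> V0" "V0 \<le> c"
      using that(2) \<open>0 < \<kappa>\<close> by (auto simp: V0_def se_lyapunov_def \<epsilon>2_def)
    have decay: "0 \<le> snd (se \<delta> 0 \<alpha>0 \<sigma>02 t) \<and> se_lyapunov \<kappa> (se \<delta> 0 \<alpha>0 \<sigma>02 t) \<le> \<rho> ^ t * V0" for t
      unfolding se_eq_funpow
      using funpow_lyapunov_decay[where P = "\<lambda>x. 0 \<le> snd x", OF step] \<rho> that(2) V0
      by (simp add: \<kappa>_def V0_def)
    have "\<forall>t. norm (se_lyapunov \<kappa> (se \<delta> 0 \<alpha>0 \<sigma>02 t)) \<le> \<rho> ^ t * V0"
      using decay \<open>0 < \<kappa>\<close> by (simp add: se_lyapunov_def case_prod_beta)
    moreover have "(\<lambda>t. \<rho> ^ t * V0) \<longlonglongrightarrow> 0"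
      using \<rho> by (intro tendsto_mult_left_zero LIMSEQ_power_zero) auto
    ultimately have "(\<lambda>t. se_lyapunov \<kappa> (se \<delta> 0 \<alpha>0 \<sigma>02 t)) \<longlonglongrightarrow> 0"
      by (rule Lim_null_comparison[OF always_eventually])
    then show ?thesis
      using se_lyapunov_tendsto_zero_imp_tendsto[OF \<open>0 < \<kappa>\<close>] decay by blast
  qed
  moreover have "0 < \<epsilon>1" "0 < \<epsilon>2"
    using \<open>0 < \<kappa>\<close> \<open>0 < c\<close> by (simp_all add: \<epsilon>1_def \<epsilon>2_def)
  ultimately show ?thesis
    by blast
qed

lemma se_map_lyapunov_nondecreasing:
  assumes "0 < \<delta>" "\<delta> < delta_global" "1/2 \<le> a" "a \<le> 1" "0 \<le> s"
    and "4 * sqrt s \<le> 1 - \<delta> / delta_global"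
  shows "se_lyapunov (1/\<delta>) (a, s) \<le> se_lyapunov (1/\<delta>) (se_map \<delta> 0 (a, s))"
proof -
  define \<gamma> where "\<gamma> = 1 - \<delta> / delta_global"
  have "0 \<le> \<gamma>"
    unfolding \<gamma>_def using assms(6) real_sqrt_ge_zero[OF assms(5)] by linarith
  then have \<gamma>: "0 \<le> \<gamma>" "\<gamma> \<le> 1" "(1 - \<gamma>) * delta_global = \<delta>"
    using assms(1) one_less_delta_global by (auto simp: \<gamma>_def)
  have a: "0 < a" "1/4 \<le> a\<^sup>2" "a\<^sup>2 \<le> 1"
    using assms(3,4) power_mono[of "1/2" a 2] power_mono[of a 1 2] by (auto simp: power2_eq_square)
  have s_le: "s \<le> s / a\<^sup>2" "s / a\<^sup>2 \<le> 4 * s"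
    using a assms(5) mult_left_mono[of 1 "4 * a\<^sup>2" s] by (auto simp: field_simps mult_left_le)
  have "16 * s \<le> \<gamma>\<^sup>2"
    using power_mono[OF assms(6)[folded \<gamma>_def], of 2] assms(5) by (simp add: power_mult_distrib)
  also have "\<dots> \<le> \<gamma>"
    using \<gamma> by (simp add: power2_eq_square mult_left_le)
  finally have "16 * s \<le> \<gamma>" .
  then have t: "2 * (s / a\<^sup>2) / 3 \<le> \<gamma>" "s / a\<^sup>2 \<le> 3"
    using s_le \<gamma> by auto
  have "(1 - \<gamma>) * s \<le> (1 - 2 * (s / a\<^sup>2) / 3) * (s / a\<^sup>2)"
    using t \<gamma> s_le assms(5) by (intro mult_mono) auto
  then have "4/pi\<^sup>2 * ((1 - \<gamma>) * s) \<le> 4/pi\<^sup>2 * ((1 - 2 * (s / a\<^sup>2) / 3) * (s / a\<^sup>2))"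
    by (rule mult_left_mono) simp
  also have "\<dots> \<le> (1 - psi1 a s)\<^sup>2"
    by (rule psi1_dist_sq_ge[OF a(1) assms(5) t(2)])
  finally have "4/pi\<^sup>2 * ((1 - \<gamma>) * s) \<le> (1 - psi1 a s)\<^sup>2" .
  moreover have "((1 - a)\<^sup>2 + (1 - \<gamma>) * s) / \<delta> \<le> psi2 a s \<delta> 0"
    using psi2_ge[OF assms(3,5,1) assms(6)[folded \<gamma>_def]] .
  ultimately have lower: "1/\<delta> * (4/pi\<^sup>2 * ((1 - \<gamma>) * s)) + ((1 - a)\<^sup>2 + (1 - \<gamma>) * s) / \<delta>
      \<le> se_lyapunov (1/\<delta>) (se_map \<delta> 0 (a, s))"
    unfolding se_lyapunov_def se_map_def prod.case using assms(1) by (intro add_mono mult_left_mono) auto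
  have "se_lyapunov (1/\<delta>) (a, s) = ((1 - a)\<^sup>2 + (1 - \<gamma>) * delta_global * s) / \<delta>"
    unfolding \<gamma>(3) using assms(1) by (simp add: se_lyapunov_def field_simps)
  also have "\<dots> = 1/\<delta> * (4/pi\<^sup>2 * ((1 - \<gamma>) * s)) + ((1 - a)\<^sup>2 + (1 - \<gamma>) * s) / \<delta>"
    using assms(1) by (simp add: delta_global_def field_simps)
  finally show ?thesis
    using lower by linarith
qed

lemma se_lyapunov_eventually_nondecreasing:
  assumes "0 < \<delta>" "\<delta> < delta_global"
    and "(\<lambda>t. fst (se \<delta> 0 \<alpha>0 \<sigma>02 t)) \<longlonglongrightarrow> 1" "(\<lambda>t. snd (se \<delta> 0 \<alpha>0 \<sigma>02 t)) \<longlonglongrightarrow> 0"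
  obtains N where "\<And>t. N \<le> t \<Longrightarrow> 0 \<le> snd (se \<delta> 0 \<alpha>0 \<sigma>02 t)"
    "\<And>t. N \<le> t \<Longrightarrow>
      se_lyapunov (1/\<delta>) (se \<delta> 0 \<alpha>0 \<sigma>02 t) \<le> se_lyapunov (1/\<delta>) (se \<delta> 0 \<alpha>0 \<sigma>02 (Suc t))"
proof -
  define x where "x t = se \<delta> 0 \<alpha>0 \<sigma>02 t" for t
  have x_Suc: "x (Suc t) = se_map \<delta> 0 (x t)" for t
    by (simp add: x_def se_eq_funpow)
  define \<gamma> where "\<gamma> = 1 - \<delta> / delta_global"
  have "0 < \<gamma>"
    using assms(1,2) one_less_delta_global by (simp add: \<gamma>_def)
  have "(\<lambda>t. 4 * sqrt (snd (x t))) \<longlonglongrightarrow> 4 * sqrt 0"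
    unfolding x_def by (intro tendsto_intros assms(4))
  then have "\<forall>\<^sub>F t in sequentially. 4 * sqrt (snd (x t)) < \<gamma>"
    using \<open>0 < \<gamma>\<close> by (intro order_tendstoD(2)) auto
  moreover have "\<forall>\<^sub>F t in sequentially. 1/2 < fst (x t)"
    unfolding x_def using assms(3) by (intro order_tendstoD(1)) auto
  ultimately have "\<forall>\<^sub>F t in sequentially. 4 * sqrt (snd (x t)) < \<gamma> \<and> 1/2 < fst (x t)"
    by (rule eventually_conj)
  then obtain N where N: "\<And>t. N \<le> t \<Longrightarrow> 4 * sqrt (snd (x t)) < \<gamma> \<and> 1/2 < fst (x t)"
    unfolding eventually_sequentially by blast
  have nonneg: "0 \<le> snd (x t)" if "N \<le> t" for t
  proof (rule ccontr)
    assume "\<not> 0 \<le> snd (x t)"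
    then have "fst (x (Suc t)) < 0"
      using N[OF that] psi1_neg[of "fst (x t)" "snd (x t)"] by (simp add: x_Suc se_map_def case_prod_beta)
    then show False
      using N[of "Suc t"] that by simp
  qed
  have "se_lyapunov (1/\<delta>) (x t) \<le> se_lyapunov (1/\<delta>) (x (Suc t))" if "Suc N \<le> t" for t
  proof -
    have "fst (x t) \<le> 1"
      using that psi1_le_one by (cases t) (auto simp: x_Suc se_map_def case_prod_beta)
    then show ?thesis
      using se_map_lyapunov_nondecreasing[OF assms(1,2), of "fst (x t)" "snd (x t)"] N[of t] nonneg[of t] that
      by (simp add: x_Suc \<gamma>_def)
  qed
  then show thesis
    using that[of "Suc N"] nonneg by (simp add: x_def)
qed

lemma se_converges_only_from_fixed_point:
  assumes "0 < \<delta>" "\<delta> < delta_global"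
    and "(\<lambda>t. fst (se \<delta> 0 \<alpha>0 \<sigma>02 t)) \<longlonglongrightarrow> 1" "(\<lambda>t. snd (se \<delta> 0 \<alpha>0 \<sigma>02 t)) \<longlonglongrightarrow> 0"
  shows "(\<alpha>0, \<sigma>02) = (1, 0)"
proof -
  define x where "x t = se \<delta> 0 \<alpha>0 \<sigma>02 t" for t
  obtain N where nonneg: "0 \<le> snd (x N)"
    and mono: "\<And>t. N \<le> t \<Longrightarrow> se_lyapunov (1/\<delta>) (x t) \<le> se_lyapunov (1/\<delta>) (x (Suc t))"
    using se_lyapunov_eventually_nondecreasing[OF assms] unfolding x_def by blast
  have "(\<lambda>t. se_lyapunov (1/\<delta>) (x t)) \<longlonglongrightarrow> 1/\<delta> * (1 - 1)\<^sup>2 + 0"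
    unfolding x_def se_lyapunov_def case_prod_beta by (intro tendsto_intros assms(3,4))
  then have "1/\<delta> * (1 - fst (x N))\<^sup>2 + snd (x N) \<le> 0"
    using eventually_mono_le_lim[of N "\<lambda>t. se_lyapunov (1/\<delta>) (x t)", OF mono] by (simp add: se_lyapunov_def case_prod_beta)
  moreover have "0 \<le> 1/\<delta> * (1 - fst (x N))\<^sup>2"
    using assms(1) by simp
  ultimately have "snd (x N) = 0" "1/\<delta> * (1 - fst (x N))\<^sup>2 = 0"
    using nonneg by linarith+
  then have "x N = (1, 0)"
    using assms(1) by (simp add: prod_eq_iff)
  then show ?thesis
    unfolding x_def se_eq_funpow
    by (rule funpow_eq_imp_eq[rotated]) (rule se_map_eq_fixed_point_imp[OF assms(1)])
qed

theorem mainTheorem5: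
  fixes \<delta> :: real
  assumes "\<delta> > 0"
  shows "(psi1 1 0 = 1 \<and> psi2 1 0 \<delta> 0 = 0)
    \<and> (\<delta> > delta_global \<longrightarrow>
           (\<exists>\<epsilon>1 > 0. \<exists>\<epsilon>2 > 0. \<forall>\<alpha>0 \<sigma>02.
             \<alpha>0 \<in> {1 - \<epsilon>1 <..< 1} \<and> \<sigma>02 \<in> {0 <..< \<epsilon>2} \<longrightarrow>
               ((\<lambda>t. fst (se \<delta> 0 \<alpha>0 \<sigma>02 t)) \<longlonglongrightarrow> 1) \<and>
               ((\<lambda>t. snd (se \<delta> 0 \<alpha>0 \<sigma>02 t)) \<longlonglongrightarrow> 0)))
    \<and> (\<delta> < delta_global \<longrightarrow>
          (\<forall>\<alpha>0 \<sigma>02. \<sigma>02 \<ge> 0 \<and> (\<alpha>0, \<sigma>02) \<noteq> (0, 0) \<and>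
             ((\<lambda>t. fst (se \<delta> 0 \<alpha>0 \<sigma>02 t)) \<longlonglongrightarrow> 1) \<and>
             ((\<lambda>t. snd (se \<delta> 0 \<alpha>0 \<sigma>02 t)) \<longlonglongrightarrow> 0) \<longrightarrow>
             (\<alpha>0, \<sigma>02) = (1, 0)))"
proof -
  have "psi1 1 0 = 1 \<and> psi2 1 0 \<delta> 0 = 0"
    by (simp add: psi1_def psi2_def arctan_conv_def)
  then show ?thesis
    using se_converges_near_fixed_point se_converges_only_from_fixed_point[OF assms] by blast
qed

end
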